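(* Let $r,h,g$ be positive integers with $g+h<gr$, and put $n=rg$. Then there exists an MR $(n,r,h,1)$-LRC over a field of size \[\ell\le\left(\max\left\{\tilde O\!\left(\tfrac nr\right),\ 2^r\right\}\right)^{\min\{h,\frac nr\}}.\]
   Context: $\tilde O(f)$ denotes $f\cdot(\log f)^{O(1)}$. Definition: let $\ell$ be a prime power, $a,g,r,h$ positive integers with $ga+h<gr$, $n=gr$, $k=n-ga-h$. An MR (maximally recoverable) $(n,r,h,a)_\ell$-LRC is an $[n,k]$ linear code over $\mathbb{F}_\ell$ with a parity-check matrix $H$ of the block form whose first $ga$ rows are block diagonal with diagonal blocks $A_1,\dots,A_g$ (each $a\times r$, coordinates split into $g$ consecutive groups of size $r$) and whose last $h$ rows are $(D_1|\cdots|D_g)$ with each $D_i$ of size $h\times r$, such that (i) each $A_i$ generates an $[r,a,r-a+1]_\ell$ MDS code, and (ii) every set of $ag+h$ columns of $H$ consisting of any $a$ columns from each group together with any $h$ further columns is linearly independent over $\mathbb{F}_\ell$. "Over a field of size $\ell$" means an MR $(n,r,h,a)_\ell$-LRC. *)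

theory Defs
  imports "HOL-Algebra.Algebra" "HOL-Analysis.Analysis"
begin

text \<open>Matrices over a finite field F (HOL-Algebra record, elements encoded as nat)
are functions nat => nat => nat; row i, column j. The parity-check matrix H has g*a+h rows:
rows t*a..<(t+1)*a form the local block A_t (supported on group t),
rows g*a..<g*a+h form the global part (D_1|...|D_g).\<close>

definition cols_lin_indep :: "nat ring \<Rightarrow> nat \<Rightarrow> (nat \<Rightarrow> nat \<Rightarrow> nat) \<Rightarrow> nat set \<Rightarrow> bool" where
  "cols_lin_indep F m H S \<longleftrightarrow>
     (\<forall>c. c \<in> S \<rightarrow> carrier F \<longrightarrow>
        (\<forall>i<m. finsum F (\<lambda>j. c j \<otimes>\<^bsub>F\<^esub> H i j) S = \<zero>\<^bsub>F\<^esub>) \<longrightarrow>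
        (\<forall>j\<in>S. c j = \<zero>\<^bsub>F\<^esub>))"

text \<open>The a x r matrix A (rows 0..<a, columns 0..<r) generates an [r,a,r-a+1] MDS code:
every nonzero combination of its rows has Hamming weight at least r-a+1
(this forces the rows to be independent, i.e. the code has dimension a).\<close>
definition generates_MDS :: "nat ring \<Rightarrow> nat \<Rightarrow> nat \<Rightarrow> (nat \<Rightarrow> nat \<Rightarrow> nat) \<Rightarrow> bool" where
  "generates_MDS F r a A \<longleftrightarrow>
     (\<forall>x. x \<in> {..<a} \<rightarrow> carrier F \<longrightarrow> (\<exists>s<a. x s \<noteq> \<zero>\<^bsub>F\<^esub>) \<longrightarrow>
        card {j. j < r \<and> finsum F (\<lambda>s. x s \<otimes>\<^bsub>F\<^esub> A s j) {..<a} \<noteq> \<zero>\<^bsub>F\<^esub>} \<ge> r - a + 1)"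

definition group :: "nat \<Rightarrow> nat \<Rightarrow> nat set" where
  "group r t = {t * r..<(t + 1) * r}"

definition MR_LRC :: "nat ring \<Rightarrow> nat \<Rightarrow> nat \<Rightarrow> nat \<Rightarrow> nat \<Rightarrow> (nat \<Rightarrow> nat \<Rightarrow> nat) \<Rightarrow> bool" where
  "MR_LRC F g r h a H \<longleftrightarrow>
     g * a + h < g * r \<and>
     (\<forall>i<g * a + h. \<forall>j<g * r. H i j \<in> carrier F) \<and>
     (\<forall>i<g * a. \<forall>j<g * r. j div r \<noteq> i div a \<longrightarrow> H i j = \<zero>\<^bsub>F\<^esub>) \<and>
     (\<forall>t<g. generates_MDS F r a (\<lambda>s j. H (t * a + s) (t * r + j))) \<and>
     (\<forall>S. S \<subseteq> {..<g * r} \<and> card S = g * a + h \<and> (\<forall>t<g. card (S \<inter> group r t) \<ge> a)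
          \<longrightarrow> cols_lin_indep F (g * a + h) H S)"

end

theory Submission
  imports Defs "HOL-Algebra.Weak_Morphisms" "HOL-Number_Theory.Number_Theory"
begin

text \<open>Take every local code to be the repetition code, so that column \<open>j\<close> of the parity-check
  matrix is the indicator of its group followed by a global part in \<open>F\<^sup>h\<close>. A column alone in
  its group can always be added to an independent set, so maximal recoverability amounts to the
  independence of every set \<open>S\<close> of columns without singleton groups and with at most \<open>h\<close> columns
  more than it has groups. The global parts are chosen greedily: when column \<open>k\<close> is added, at
  most \<open>min (2\<^sup>k) (((n + 1) r)\<^sup>h)\<close> such sets are endangered, and each of them forbids at most
  \<open>q\<^sup>h\<^sup>-\<^sup>1\<close> of the \<open>q\<^sup>h\<close> possible global parts. A prime field of size just above that
  minimum exists by Bertrand's postulate, and it is within the claimed bound because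
  \<open>max (C g (1 + ln g)\<^sup>C) (2\<^sup>r) \<ge> 4 g r\<^sup>2\<close>.\<close>

section \<open>Bertrand's postulate\<close>

text \<open>HOL-Algebra's \<open>prime\<close> (primality in a monoid) hides primality of natural numbers.\<close>
abbreviation nat_prime :: "nat \<Rightarrow> bool" where "nat_prime \<equiv> Factorial_Ring.prime"

lemma multiplicity_lt_self:
  assumes "nat_prime p" "0 < x"
  shows "multiplicity p x < x"
proof -
  have "multiplicity p x < 2 ^ multiplicity p x" by (rule less_exp)
  also have "\<dots> \<le> p ^ multiplicity p x"
    using prime_ge_2_nat[OF assms(1)] by (intro power_mono) auto
  also have "\<dots> \<le> x" using multiplicity_dvd[of p x] assms(2) by (rule dvd_imp_le)
  finally show ?thesis .
qed

lemma multiplicity_Suc_eq_card: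
  assumes p: "nat_prime p"
  shows "multiplicity p (Suc n) = card {i\<in>{1..Suc n}. p ^ i dvd Suc n}"
proof -
  have "\<not> p dvd 1" using prime_gt_1_nat[OF p] by (simp add: nat_dvd_1_iff_1)
  then have iff: "p ^ i dvd Suc n \<longleftrightarrow> i \<le> multiplicity p (Suc n)" for i
    using power_dvd_iff_le_multiplicity[of "Suc n" p] by blast
  have "{i\<in>{1..Suc n}. p ^ i dvd Suc n} = {1..multiplicity p (Suc n)}"
    using multiplicity_lt_self[OF p, of "Suc n"] by (auto simp: iff)
  then show ?thesis by simp
qed

lemma multiplicity_fact:
  assumes p: "nat_prime p"
  shows "multiplicity p (fact n :: nat) = (\<Sum>i\<in>{1..n}. n div p ^ i)"
proof (induction n)
  case 0
  then show ?case by simp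
next
  case (Suc n)
  have p1: "p > 1" using prime_gt_1_nat[OF p] .
  have "multiplicity p (fact (Suc n) :: nat) = multiplicity p (Suc n) + multiplicity p (fact n :: nat)"
    using prime_elem_multiplicity_mult_distrib[of p "Suc n" "fact n :: nat"] p by simp
  also have "multiplicity p (Suc n) = (\<Sum>i\<in>{1..Suc n}. if p ^ i dvd Suc n then 1 else 0)"
    using multiplicity_Suc_eq_card[OF p] sum.inter_filter[of "{1..Suc n}" "\<lambda>_. 1::nat"] by simp
  also have "multiplicity p (fact n :: nat) = (\<Sum>i\<in>{1..Suc n}. n div p ^ i)"
  proof -
    have "n < p ^ Suc n"
      using less_exp[of n] power_mono[of 2 p n] power_strict_increasing[of n "Suc n" p] p1 by linarith
    then show ?thesis using Suc.IH by simp
  qed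
  also have "(\<Sum>i\<in>{1..Suc n}. if p ^ i dvd Suc n then 1 else 0) + (\<Sum>i\<in>{1..Suc n}. n div p ^ i)
      = (\<Sum>i\<in>{1..Suc n}. Suc n div p ^ i)"
    unfolding sum.distrib[symmetric] using p1 by (intro sum.cong) (auto simp: div_Suc dvd_eq_mod_eq_0)
  finally show ?case .
qed

lemma double_div_bounds:
  fixes m q :: nat
  assumes "q > 0"
  shows "2 * (m div q) \<le> 2 * m div q" "2 * m div q \<le> 2 * (m div q) + 1"
proof -
  have "2 * m = q * (2 * (m div q)) + 2 * (m mod q)"
    by (metis add_mult_distrib2 div_mult_mod_eq mult.commute mult.left_commute)
  then have eq: "2 * m div q = 2 * (m div q) + 2 * (m mod q) div q" using assms by simp
  have "2 * (m mod q) < 2 * q" using assms by simp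
  then have "2 * (m mod q) div q < 2" by (rule less_mult_imp_div_less)
  then show "2 * (m div q) \<le> 2 * m div q" "2 * m div q \<le> 2 * (m div q) + 1" using eq by simp_all
qed

lemma multiplicity_central_binomial:
  assumes p: "nat_prime p"
  shows "multiplicity p (2 * m choose m) = (\<Sum>i\<in>{1..2*m}. 2 * m div p ^ i - 2 * (m div p ^ i))"
proof -
  have p1: "p > 1" using prime_gt_1_nat[OF p] .
  have tail: "(\<Sum>i\<in>{1..m}. m div p ^ i) = (\<Sum>i\<in>{1..2*m}. m div p ^ i)"
  proof (rule sum.mono_neutral_left)
    have "m < p ^ i" if "m < i" for i
      using less_exp[of m] power_mono[of 2 p m] power_increasing[of m i p] p1 that by linarith
    then show "\<forall>i\<in>{1..2*m} - {1..m}. m div p ^ i = 0" by auto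
  qed auto
  have "fact (2 * m) = fact m * fact m * (2 * m choose m)"
    using binomial_fact_lemma[of m "2 * m"] by (simp add: mult_2)
  then have "multiplicity p (fact (2 * m) :: nat)
      = 2 * multiplicity p (fact m :: nat) + multiplicity p (2 * m choose m)"
    using p by (simp add: prime_elem_multiplicity_mult_distrib)
  then have "multiplicity p (2 * m choose m)
      = multiplicity p (fact (2 * m) :: nat) - 2 * multiplicity p (fact m :: nat)"
    by simp
  also have "\<dots> = (\<Sum>i\<in>{1..2*m}. 2 * m div p ^ i) - (\<Sum>i\<in>{1..2*m}. 2 * (m div p ^ i))"
    by (simp only: multiplicity_fact[OF p] sum_distrib_left tail)
  also have "\<dots> = (\<Sum>i\<in>{1..2*m}. 2 * m div p ^ i - 2 * (m div p ^ i))"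
    using p1 double_div_bounds(1) by (intro sum_subtractf_nat[symmetric]) auto
  finally show ?thesis .
qed

lemma prime_power_multiplicity_central_binomial_le:
  assumes p: "nat_prime p" and m: "m \<ge> 1"
  shows "p ^ multiplicity p (2 * m choose m) \<le> 2 * m"
proof (rule ccontr)
  define v where "v = multiplicity p (2 * m choose m)"
  define t where "t i = 2 * m div p ^ i - 2 * (m div p ^ i)" for i
  assume "\<not> p ^ multiplicity p (2 * m choose m) \<le> 2 * m"
  then have big: "2 * m < p ^ v" unfolding v_def by simp
  have p1: "p > 1" using prime_gt_1_nat[OF p] .
  have "v \<ge> 1" using big m by (cases v) auto
  have t_le_1: "t i \<le> 1" for i using double_div_bounds(2)[of "p ^ i" m] p1 unfolding t_def by simp
  have t_eq_0: "t i = 0" if "v \<le> i" for i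
  proof -
    have "2 * m < p ^ i" using big power_increasing[OF that, of p] p1 by linarith
    then show ?thesis unfolding t_def by simp
  qed
  have "v = (\<Sum>i\<in>{1..2*m}. t i)" unfolding v_def t_def by (rule multiplicity_central_binomial[OF p])
  also have "\<dots> = (\<Sum>i\<in>{1..2*m} \<inter> {..<v}. t i)"
    by (intro sum.mono_neutral_right) (auto simp: t_eq_0 not_less)
  also have "\<dots> \<le> (\<Sum>i\<in>{1..<v}. t i)" by (intro sum_mono2) auto
  also have "\<dots> \<le> (\<Sum>i\<in>{1..<v}. 1)" using t_le_1 by (intro sum_mono) auto
  finally show False using \<open>v \<ge> 1\<close> by simp
qed

lemma multiplicity_central_binomial_eq_0:
  assumes p: "nat_prime p" and m: "m \<ge> 5" and lo: "2 * m < 3 * p" and hi: "p \<le> m"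
  shows "multiplicity p (2 * m choose m) = 0"
proof -
  have p1: "p > 1" using prime_gt_1_nat[OF p] .
  have "4 * (m * m) < 9 * (p * p)" using mult_strict_mono[OF lo lo] p1 by simp
  moreover have "5 * m \<le> m * m" using m by simp
  ultimately have pp: "2 * m < p * p" by linarith
  have "2 * m div p ^ i - 2 * (m div p ^ i) = 0" if "i \<ge> 1" for i
  proof (cases "i = 1")
    case True
    have "m div p = 1" "2 * m div p = 2" by (rule div_nat_eqI; use lo hi in simp)+
    then show ?thesis using True by simp
  next
    case False
    then have "p * p \<le> p ^ i"
      using that p1 power_increasing[of 2 i p] by (simp add: power2_eq_square)
    then show ?thesis using pp by simp
  qed
  then have "(\<Sum>i\<in>{1..2*m}. 2 * m div p ^ i - 2 * (m div p ^ i)) = 0" by simp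
  then show ?thesis using multiplicity_central_binomial[OF p] by simp
qed

lemma four_pow_le_central_binomial: "4 ^ m \<le> (2 * m + 1) * (2 * m choose m)"
proof -
  have "(4::nat) ^ m = (\<Sum>k\<le>2*m. 2 * m choose k)" by (simp add: choose_row_sum power_mult)
  also have "\<dots> \<le> (\<Sum>k\<le>2*m. 2 * m choose m)" by (intro sum_mono binomial_maximum')
  finally show ?thesis by simp
qed

lemma prod_primes_dvd:
  fixes n :: nat
  assumes "finite A" "\<And>p. p \<in> A \<Longrightarrow> nat_prime p" "\<And>p. p \<in> A \<Longrightarrow> p dvd n"
  shows "\<Prod>A dvd n"
  using assms
proof (induction A rule: finite_induct)
  case empty
  then show ?case by simp
next
  case (insert x A)
  have "coprime x (\<Prod>A)"
    using insert by (intro prod_coprime_right primes_coprime) auto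
  then show ?case using insert by (simp add: divides_mult)
qed

lemma binomial_odd_middle_le: "2 * k + 1 choose k \<le> 4 ^ k"
proof -
  have "2 * (2 * k + 1 choose k) = (2 * k + 1 choose k) + (2 * k + 1 choose (k + 1))"
    using binomial_symmetric[of k "2 * k + 1"] by simp
  also have "\<dots> = (\<Sum>i\<in>{k, k + 1}. 2 * k + 1 choose i)" by simp
  also have "\<dots> \<le> (\<Sum>i\<le>2*k+1. 2 * k + 1 choose i)" by (intro sum_mono2) auto
  also have "\<dots> = 2 * 4 ^ k" by (simp only: choose_row_sum) (simp add: power_mult)
  finally show ?thesis by simp
qed

lemma prod_primes_upper_half_le:
  "\<Prod>{p. k + 1 < p \<and> p \<le> 2 * k + 1 \<and> nat_prime p} \<le> 4 ^ k"
proof -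
  have "\<Prod>{p. k + 1 < p \<and> p \<le> 2 * k + 1 \<and> nat_prime p} dvd (2 * k + 1 choose k)"
  proof (rule prod_primes_dvd)
    fix p assume p: "p \<in> {p. k + 1 < p \<and> p \<le> 2 * k + 1 \<and> nat_prime p}"
    then have "p dvd fact k * fact (k + 1) * (2 * k + 1 choose k)"
      using binomial_fact_lemma[of k "2 * k + 1"] prime_dvd_fact_iff[of p "2 * k + 1"]
      by (simp add: mult_2 del: fact_Suc)
    moreover have "\<not> p dvd fact k" "\<not> p dvd fact (k + 1)"
      using p by (simp_all add: prime_dvd_fact_iff del: fact_Suc)
    ultimately show "p dvd (2 * k + 1 choose k)"
      using p by (simp add: prime_dvd_mult_iff)
  qed auto
  then have "\<Prod>{p. k + 1 < p \<and> p \<le> 2 * k + 1 \<and> nat_prime p} \<le> 2 * k + 1 choose k"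
    by (rule dvd_imp_le) simp
  then show ?thesis using binomial_odd_middle_le[of k] by linarith
qed

definition primorial :: "nat \<Rightarrow> nat" where
  "primorial n = \<Prod>{p. p \<le> n \<and> nat_prime p}"

lemma primorial_pos: "primorial n > 0"
  unfolding primorial_def by (rule prod_pos) (auto simp: prime_gt_0_nat)

lemma primorial_le_four_pow_small:
  assumes "n \<le> 2"
  shows "primorial n \<le> 4 ^ n"
proof -
  have "p = 2" if "p \<le> n" "nat_prime p" for p
    using prime_ge_2_nat[OF that(2)] that(1) assms by linarith
  then have "{p. p \<le> n \<and> nat_prime p} \<subseteq> {2}" by blast
  then have "{p. p \<le> n \<and> nat_prime p} = {} \<or> {p. p \<le> n \<and> nat_prime p} = {2}"
    by (rule subset_singletonD)
  then show ?thesis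
  proof
    assume "{p. p \<le> n \<and> nat_prime p} = {}"
    then have "primorial n = 1" unfolding primorial_def by (simp only: prod.empty)
    then show ?thesis by simp
  next
    assume two: "{p. p \<le> n \<and> nat_prime p} = {2}"
    then have "2 \<le> n" by (metis (mono_tags) CollectD insertI1)
    then have "(4::nat) ^ 1 \<le> 4 ^ n" by (intro power_increasing) auto
    moreover have "primorial n = 2" unfolding primorial_def two by simp
    ultimately show ?thesis by simp
  qed
qed

text \<open>Erdos's induction: primes in \<open>(k + 1, 2k + 1]\<close> divide \<open>(2k + 1 choose k) \<le> 4\<^sup>k\<close>.\<close>
lemma primorial_le_four_pow: "primorial n \<le> 4 ^ n"
proof (induction n rule: less_induct)
  case (less n)
  consider "n \<le> 2" | "n > 2" "even n" | k where "n = 2 * k + 1" "k \<ge> 1"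
    by (cases "even n"; cases "n \<le> 2") (auto elim!: oddE)
  then show ?case
  proof cases
    case 1
    then show ?thesis by (rule primorial_le_four_pow_small)
  next
    case 2
    then have "\<not> nat_prime n" using prime_odd_nat[of n] by auto
    then have "p \<le> n \<and> nat_prime p \<longleftrightarrow> p \<le> n - 1 \<and> nat_prime p" for p
      by (cases "p = n") auto
    then have "primorial n = primorial (n - 1)" by (simp add: primorial_def)
    also have "\<dots> \<le> 4 ^ (n - 1)" using less 2 by simp
    also have "\<dots> \<le> 4 ^ n" by simp
    finally show ?thesis .
  next
    case 3
    have "{p. p \<le> n \<and> nat_prime p}
        = {p. p \<le> k + 1 \<and> nat_prime p} \<union> {p. k + 1 < p \<and> p \<le> 2 * k + 1 \<and> nat_prime p}"
      using 3 by auto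
    then have "primorial n = primorial (k + 1) * \<Prod>{p. k + 1 < p \<and> p \<le> 2 * k + 1 \<and> nat_prime p}"
      unfolding primorial_def by (subst prod.union_disjoint[symmetric]) auto
    also have "\<dots> \<le> 4 ^ (k + 1) * 4 ^ k"
      using less.IH[of "k + 1"] 3 prod_primes_upper_half_le[of k] by (intro mult_mono) auto
    also have "(4::nat) ^ (k + 1) * 4 ^ k = 4 ^ n"
      unfolding 3 power_add[symmetric] by (simp add: algebra_simps)
    finally show ?thesis .
  qed
qed

lemma prime_factor_central_binomial_if_no_prime_between:
  assumes m: "m \<ge> 5" and no_prime: "\<nexists>p. nat_prime p \<and> m < p \<and> p \<le> 2 * m"
    and p: "p \<in> prime_factors (2 * m choose m)"
  shows "1 \<le> multiplicity p (2 * m choose m)" "p ^ multiplicity p (2 * m choose m) \<le> 2 * m"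
    "3 * p \<le> 2 * m"
proof -
  have "nat_prime p" "p dvd (2 * m choose m)" using p by auto
  then show v: "1 \<le> multiplicity p (2 * m choose m)"
    using multiplicity_gt_zero_iff[of "2 * m choose m" p] prime_gt_1_nat[of p] by simp
  show pv: "p ^ multiplicity p (2 * m choose m) \<le> 2 * m"
    using prime_power_multiplicity_central_binomial_le \<open>nat_prime p\<close> m by simp
  have "p \<le> p ^ multiplicity p (2 * m choose m)"
    using power_increasing[OF v, of p] prime_gt_1_nat[OF \<open>nat_prime p\<close>] by simp
  then have "p \<le> m" using pv no_prime \<open>nat_prime p\<close> by (meson le_trans not_le)
  then show "3 * p \<le> 2 * m"
    using multiplicity_central_binomial_eq_0[OF \<open>nat_prime p\<close> m] v by linarith
qed

text \<open>Without primes in \<open>(m, 2m]\<close>, the central binomial coefficient has only prime factors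
  \<open>p \<le> 2m/3\<close>; those above \<open>\<surd>(2m)\<close> occur at most once, the others contribute at most \<open>2m\<close> each.\<close>
lemma central_binomial_le_if_no_prime_between:
  assumes m: "m \<ge> 5" and no_prime: "\<nexists>p. nat_prime p \<and> m < p \<and> p \<le> 2 * m"
    and s: "2 * m < s * s"
  shows "2 * m choose m \<le> (2 * m) ^ s * 4 ^ (2 * m div 3)"
proof -
  define C where "C = 2 * m choose m"
  define v where "v p = multiplicity p C" for p
  define A where "A = {p\<in>prime_factors C. p * p \<le> 2 * m}"
  define B where "B = {p\<in>prime_factors C. \<not> p * p \<le> 2 * m}"
  note factor = prime_factor_central_binomial_if_no_prime_between[OF m no_prime, folded C_def v_def]
  have "C > 0" unfolding C_def by simp
  have "C = (\<Prod>p\<in>prime_factors C. p ^ v p)"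
    unfolding v_def using prime_factorization_nat[OF \<open>C > 0\<close>] .
  also have "prime_factors C = A \<union> B" unfolding A_def B_def by auto
  also have "(\<Prod>p\<in>A \<union> B. p ^ v p) = (\<Prod>p\<in>A. p ^ v p) * (\<Prod>p\<in>B. p ^ v p)"
    by (rule prod.union_disjoint) (auto simp: A_def B_def)
  also have "(\<Prod>p\<in>A. p ^ v p) \<le> (2 * m) ^ s"
  proof -
    have "A \<subseteq> {..<s}"
      using s by (auto simp: A_def) (meson le_less_trans mult_le_mono not_le)
    then have "card A \<le> s" using card_mono[of "{..<s}" A] by simp
    have "(\<Prod>p\<in>A. p ^ v p) \<le> (\<Prod>p\<in>A. 2 * m)"
      using factor(2) by (intro prod_mono) (auto simp: A_def)
    also have "\<dots> = (2 * m) ^ card A" by simp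
    also have "\<dots> \<le> (2 * m) ^ s" using \<open>card A \<le> s\<close> m by (intro power_increasing) auto
    finally show ?thesis .
  qed
  also have "(\<Prod>p\<in>B. p ^ v p) \<le> primorial (2 * m div 3)"
  proof -
    have "v p = 1" if "p \<in> B" for p
    proof (rule ccontr)
      assume "v p \<noteq> 1"
      from that have p: "p \<in> prime_factors C" and big: "2 * m < p * p" by (auto simp: B_def)
      then have "2 \<le> v p" "p > 1" using factor(1)[OF p] \<open>v p \<noteq> 1\<close> prime_gt_1_nat by auto
      then have "p ^ 2 \<le> p ^ v p" by (intro power_increasing) auto
      then show False using big factor(2)[OF p] by (simp add: power2_eq_square)
    qed
    then have "(\<Prod>p\<in>B. p ^ v p) = \<Prod>B" by simp
    also have "\<dots> \<le> primorial (2 * m div 3)"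
    proof (rule dvd_imp_le[OF _ primorial_pos])
      have "B \<subseteq> {p. p \<le> 2 * m div 3 \<and> nat_prime p}"
        using factor(3) by (auto simp: B_def less_eq_div_iff_mult_less_eq mult.commute)
      then show "\<Prod>B dvd primorial (2 * m div 3)"
        unfolding primorial_def by (intro prod_dvd_prod_subset) auto
    qed
    finally show ?thesis .
  qed
  also have "primorial (2 * m div 3) \<le> 4 ^ (2 * m div 3)" by (rule primorial_le_four_pow)
  finally show ?thesis unfolding C_def by simp
qed

lemma six_mult_lt_four_pow: "k \<ge> 7 \<Longrightarrow> 6 * ((k + 1) * (1 + 2 ^ (k + 1))) < (4::nat) ^ k"
proof (induction k rule: nat_induct_at_least)
  case base
  then show ?case by simp
next
  case (Suc k)
  have "(Suc k + 1) * (1 + 2 ^ (Suc k + 1)) \<le> (2 * (k + 1)) * (2 * (1 + 2 ^ (k + 1)))"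
    by (intro mult_mono) auto
  then show ?case using Suc.IH by simp
qed

lemma bertrand_large:
  assumes m: "m \<ge> 8192"
  shows "\<exists>p. nat_prime p \<and> m < p \<and> p \<le> 2 * m"
proof (rule ccontr)
  assume no_prime: "\<nexists>p. nat_prime p \<and> m < p \<and> p \<le> 2 * m"
  obtain k where k: "4 ^ k \<le> 2 * m" "2 * m < 4 ^ (k + 1)"
    using ex_power_ivl1[of 4 "2 * m"] m by auto
  have "k \<ge> 7"
  proof (rule ccontr)
    assume "\<not> k \<ge> 7"
    then have "(4::nat) ^ (k + 1) \<le> 4 ^ 7" by (intro power_increasing) auto
    then show False using k m by simp
  qed
  have s: "2 * m < 2 ^ (k + 1) * 2 ^ (k + 1)"
    using k by (simp add: power_mult_distrib[symmetric])
  have "(4::nat) ^ m \<le> (2 * m + 1) * (2 * m choose m)" by (rule four_pow_le_central_binomial)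
  also have "\<dots> \<le> 4 ^ (k + 1) * ((4 ^ (k + 1)) ^ 2 ^ (k + 1) * 4 ^ (2 * m div 3))"
  proof (rule mult_mono)
    have "2 * m choose m \<le> (2 * m) ^ 2 ^ (k + 1) * 4 ^ (2 * m div 3)"
      using central_binomial_le_if_no_prime_between[OF _ no_prime s] m by simp
    also have "\<dots> \<le> (4 ^ (k + 1)) ^ 2 ^ (k + 1) * 4 ^ (2 * m div 3)"
      using k by (intro mult_right_mono power_mono) auto
    finally show "2 * m choose m \<le> (4 ^ (k + 1)) ^ 2 ^ (k + 1) * 4 ^ (2 * m div 3)" .
  qed (use k in auto)
  also have "\<dots> = 4 ^ ((k + 1) + (k + 1) * 2 ^ (k + 1) + 2 * m div 3)"
    by (simp add: power_add power_mult)
  finally have "m \<le> (k + 1) + (k + 1) * 2 ^ (k + 1) + 2 * m div 3"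
    by (rule power_le_imp_le_exp[rotated]) simp
  then have "4 ^ k \<le> 6 * ((k + 1) * (1 + 2 ^ (k + 1)))" using k by (simp add: algebra_simps)
  then show False using six_mult_lt_four_pow[OF \<open>k \<ge> 7\<close>] by simp
qed

lemma prime_nat_if_no_small_divisor:
  assumes "1 < n" "n < s * s" "list_all (\<lambda>d. d * d \<le> n \<longrightarrow> \<not> d dvd n) [2..<s]"
  shows "nat_prime n"
proof (rule ccontr)
  assume "\<not> nat_prime n"
  then obtain d where d: "d dvd n" "d \<noteq> 1" "d \<noteq> n" using assms(1) by (auto simp: prime_nat_iff)
  then obtain e where e: "n = d * e" by blast
  then have "d * e \<noteq> 0" using assms(1) by linarith
  then have "d \<noteq> 0" "e \<noteq> 0" by simp_all
  then have "1 < d" "1 < e" using d(2,3) e by auto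
  define f where "f = min d e"
  have "f dvd n" "2 \<le> f" using e \<open>1 < d\<close> \<open>1 < e\<close> by (auto simp: f_def min_def)
  moreover have "f * f \<le> n" unfolding e f_def by (intro mult_mono) auto
  moreover from this have "f < s" using assms(2) by (meson le_less_trans mult_le_mono not_le)
  ultimately show False using assms(3) by (auto simp: list_all_iff)
qed

lemma prime_between_by_ladder:
  assumes "list_all nat_prime ps" "successively (\<lambda>p q. p < q \<and> q \<le> 2 * p) (a # ps)"
    and "a \<le> m" "m < last (a # ps)"
  shows "\<exists>p. nat_prime p \<and> m < p \<and> p \<le> 2 * m"
  using assms
proof (induction ps arbitrary: a)
  case Nil
  then show ?case by simp
next
  case (Cons q qs)
  show ?case
  proof (cases "m < q")
    case True
    then show ?thesis using Cons.prems by (intro exI[of _ q]) auto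
  next
    case False
    then show ?thesis using Cons.prems by (intro Cons.IH[of q]) auto
  qed
qed

lemma bertrand_small:
  assumes "1 \<le> m" "m < 9973"
  shows "\<exists>p. nat_prime p \<and> m < p \<and> p \<le> 2 * m"
proof (rule prime_between_by_ladder)
  let ?ladder = "[2, 3, 5, 7, 13, 23, 43, 83, 163, 317, 631, 1259, 2503, 5003, 9973]"
  have "list_all (\<lambda>n. 1 < n \<and> n < 100 * 100 \<and> list_all (\<lambda>d. d * d \<le> n \<longrightarrow> \<not> d dvd n) [2..<100])
      ?ladder"
    by simp
  then show "list_all nat_prime ?ladder"
    by (rule list.pred_mono_strong) (blast intro: prime_nat_if_no_small_divisor)
qed (use assms in simp_all)

theorem bertrand: "1 \<le> m \<Longrightarrow> \<exists>p. nat_prime p \<and> m < p \<and> p \<le> 2 * m"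
  using bertrand_small bertrand_large by (cases "m < 8192") auto

section \<open>Adding a column to independent columns\<close>

lemma (in abelian_group) finsum_eq_imp_eq_at:
  assumes "finite A" "x \<in> A" "f \<in> A \<rightarrow> carrier G" "f' \<in> A \<rightarrow> carrier G"
    and "\<And>y. y \<in> A - {x} \<Longrightarrow> f y = f' y" "finsum G f A = finsum G f' A"
  shows "f x = f' x"
proof -
  have split: "finsum G \<phi> A = \<phi> x \<oplus> finsum G \<phi> (A - {x})" if "\<phi> \<in> A \<rightarrow> carrier G" for \<phi>
  proof -
    have "finsum G \<phi> A = finsum G \<phi> (insert x (A - {x}))" using assms(2) by (simp add: insert_absorb)
    also have "\<dots> = \<phi> x \<oplus> finsum G \<phi> (A - {x})"
      using assms(1,2) that by (intro finsum_insert) auto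
    finally show ?thesis .
  qed
  have "finsum G f (A - {x}) = finsum G f' (A - {x})"
    using assms(3,4,5) by (intro finsum_cong') auto
  then have "f x \<oplus> finsum G f' (A - {x}) = f' x \<oplus> finsum G f' (A - {x})"
    using assms(6) split[OF assms(3)] split[OF assms(4)] by simp
  moreover have "finsum G f' (A - {x}) \<in> carrier G" using assms(4) by (intro finsum_closed) auto
  moreover have "f x \<in> carrier G" "f' x \<in> carrier G" using assms(2,3,4) by auto
  ultimately show ?thesis by simp
qed

lemma (in field) eq_lincomb_if_lincomb_eq_zero:
  assumes "finite A" "a \<in> carrier R" "a \<noteq> \<zero>" "x \<in> carrier R"
    and "c \<in> A \<rightarrow> carrier R" "y \<in> A \<rightarrow> carrier R"
    and "a \<otimes> x \<oplus> (\<Oplus>j\<in>A. c j \<otimes> y j) = \<zero>"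
  shows "x = (\<Oplus>j\<in>A. ((\<ominus> (inv a)) \<otimes> c j) \<otimes> y j)"
proof -
  have inv: "inv a \<in> carrier R" "inv a \<otimes> a = \<one>" using assms(2,3) field_Units by auto
  have cy: "(\<lambda>j. c j \<otimes> y j) \<in> A \<rightarrow> carrier R" using assms(5,6) by auto
  define s where "s = (\<Oplus>j\<in>A. c j \<otimes> y j)"
  have s: "s \<in> carrier R" unfolding s_def using cy by (rule finsum_closed)
  have "a \<otimes> x = \<ominus> s" using sum_zero_eq_neg[of "a \<otimes> x" s] assms(2,4,7) s unfolding s_def by simp
  then have "inv a \<otimes> (a \<otimes> x) = inv a \<otimes> (\<ominus> s)" by simp
  then have "x = inv a \<otimes> (\<ominus> s)" using inv assms(2,4) by (simp add: m_assoc[symmetric])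
  also have "\<dots> = (\<ominus> (inv a)) \<otimes> s" using inv s by (simp add: l_minus r_minus)
  also have "\<dots> = (\<Oplus>j\<in>A. (\<ominus> (inv a)) \<otimes> (c j \<otimes> y j))"
    unfolding s_def using inv by (intro finsum_rdistr[OF assms(1) _ cy]) simp
  also have "\<dots> = (\<Oplus>j\<in>A. ((\<ominus> (inv a)) \<otimes> c j) \<otimes> y j)"
    using inv assms(5,6) by (intro finsum_cong') (auto simp: m_assoc Pi_iff)
  finally show ?thesis .
qed

locale nat_field = field F for F :: "nat ring" (structure)

lemma (in nat_field) cols_lin_indep_insert:
  assumes "finite S" "k \<notin> S" "cols_lin_indep F m H S"
    and closed: "\<And>i j. i < m \<Longrightarrow> H i j \<in> carrier F"
    and not_comb: "\<And>d. d \<in> S \<rightarrow> carrier F \<Longrightarrow> \<exists>i<m. H i k \<noteq> (\<Oplus>j\<in>S. d j \<otimes> H i j)"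
  shows "cols_lin_indep F m H (insert k S)"
  unfolding cols_lin_indep_def
proof (intro allI impI)
  fix c assume c: "c \<in> insert k S \<rightarrow> carrier F"
    and zero: "\<forall>i<m. (\<Oplus>j\<in>insert k S. c j \<otimes> H i j) = \<zero>"
  have cS: "c \<in> S \<rightarrow> carrier F" and ck: "c k \<in> carrier F" using c by auto
  have split: "c k \<otimes> H i k \<oplus> (\<Oplus>j\<in>S. c j \<otimes> H i j) = \<zero>" if "i < m" for i
    using zero that assms(1,2) cS ck closed by (simp add: finsum_insert Pi_iff)
  have "c k = \<zero>"
  proof (rule ccontr)
    assume "c k \<noteq> \<zero>"
    then have "H i k = (\<Oplus>j\<in>S. ((\<ominus> (inv (c k))) \<otimes> c j) \<otimes> H i j)" if "i < m" for i
      using eq_lincomb_if_lincomb_eq_zero[OF assms(1) ck _ _ cS _ split] that closed by auto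
    moreover have "(\<lambda>j. (\<ominus> (inv (c k))) \<otimes> c j) \<in> S \<rightarrow> carrier F"
      using cS ck \<open>c k \<noteq> \<zero>\<close> field_Units by auto
    ultimately show False using not_comb by blast
  qed
  then have "\<forall>i<m. (\<Oplus>j\<in>S. c j \<otimes> H i j) = \<zero>"
    using split closed cS by (simp add: finsum_closed Pi_iff)
  then have "\<forall>j\<in>S. c j = \<zero>" using assms(3) cS unfolding cols_lin_indep_def by blast
  then show "\<forall>j\<in>insert k S. c j = \<zero>" using \<open>c k = \<zero>\<close> by blast
qed

section \<open>The greedy construction\<close>

lemma mem_group_iff:
  assumes "0 < r"
  shows "j \<in> group r t \<longleftrightarrow> j div r = t"
proof -
  have "j div r = t \<longleftrightarrow> t \<le> j div r \<and> j div r < Suc t" by linarith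
  then show ?thesis using assms by (simp add: group_def less_eq_div_iff_mult_less_eq div_less_iff_less_mult)
qed

lemma card_bounded_subsets_le: "card {V. V \<subseteq> {..<n::nat} \<and> card V \<le> h} \<le> (n + 1) ^ h"
proof -
  have "{V. V \<subseteq> {..<n} \<and> card V \<le> h} = (\<Union>i\<le>h. {V. V \<subseteq> {..<n} \<and> card V = i})" by auto
  then have "card {V. V \<subseteq> {..<n} \<and> card V \<le> h} \<le> (\<Sum>i\<le>h. card {V. V \<subseteq> {..<n} \<and> card V = i})"
    by (simp add: card_UN_le)
  also have "\<dots> = (\<Sum>i\<le>h. n choose i)" by (simp add: n_subsets)
  also have "\<dots> \<le> (\<Sum>i\<le>h. (h choose i) * n ^ i)"
  proof (rule sum_mono)
    fix i assume "i \<in> {..h}"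
    then have "1 \<le> h choose i" by (simp add: Suc_le_eq)
    moreover have "n choose i \<le> n ^ i"
      by (cases "i \<le> n") (simp_all add: binomial_le_pow binomial_eq_0)
    ultimately show "n choose i \<le> (h choose i) * n ^ i" by (metis mult_1 mult_le_mono le_trans)
  qed
  also have "\<dots> = (n + 1) ^ h" using binomial_ring[of n 1 h] by (simp add: mult.commute)
  finally show ?thesis .
qed

locale lrc_construction = nat_field +
  fixes g r h :: nat
  assumes r_pos: "0 < r"
begin

text \<open>Column \<open>j\<close> of the parity-check matrix is the unit vector of its group \<open>j div r\<close> in
  the first \<open>g\<close> rows (each local code is the repetition code, \<open>A\<^sub>t\<close> the all-ones row)
  followed by the global part \<open>U j 0, \<dots>, U j (h - 1)\<close>.\<close>
definition check_matrix :: "(nat \<Rightarrow> nat \<Rightarrow> nat) \<Rightarrow> nat \<Rightarrow> nat \<Rightarrow> nat" where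
  "check_matrix U i j = (if i < g then (if j div r = i then \<one> else \<zero>) else U j (i - g))"

definition entries_in_carrier :: "(nat \<Rightarrow> nat \<Rightarrow> nat) \<Rightarrow> bool" where
  "entries_in_carrier U \<longleftrightarrow> (\<forall>j i. U j i \<in> carrier F)"

abbreviation indep :: "(nat \<Rightarrow> nat \<Rightarrow> nat) \<Rightarrow> nat set \<Rightarrow> bool" where
  "indep U S \<equiv> cols_lin_indep F (g + h) (check_matrix U) S"

definition groups :: "nat set \<Rightarrow> nat set" where
  "groups S = (\<lambda>j. j div r) ` S"

definition num_groups :: "nat set \<Rightarrow> nat" where
  "num_groups S = card (groups S)"

definition no_singleton_group :: "nat set \<Rightarrow> bool" where
  "no_singleton_group S \<longleftrightarrow> (\<forall>j\<in>S. \<exists>j'\<in>S. j' \<noteq> j \<and> j' div r = j div r)"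

lemma check_matrix_closed: "entries_in_carrier U \<Longrightarrow> check_matrix U i j \<in> carrier F"
  unfolding check_matrix_def entries_in_carrier_def by auto

lemma indep_cong:
  assumes "entries_in_carrier U" "entries_in_carrier U'" "\<And>j i. j \<in> S \<Longrightarrow> U j i = U' j i"
  shows "indep U S \<longleftrightarrow> indep U' S"
proof -
  have "(\<Oplus>j\<in>S. c j \<otimes> check_matrix U i j) = (\<Oplus>j\<in>S. c j \<otimes> check_matrix U' i j)"
    if "c \<in> S \<rightarrow> carrier F" for c i
    using that assms by (intro finsum_cong') (auto simp: check_matrix_def entries_in_carrier_def Pi_iff)
  then show ?thesis unfolding cols_lin_indep_def by simp
qed

lemma finsum_local_row:
  assumes "finite S" "c \<in> S \<rightarrow> carrier F" "t < g"
  shows "(\<Oplus>j\<in>S. c j \<otimes> check_matrix U t j) = (\<Oplus>j\<in>{j\<in>S. j div r = t}. c j)"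
  using assms by (intro add.finprod_mono_neutral_cong_right) (auto simp: check_matrix_def Pi_iff)

lemma indep_insert_singleton_group:
  assumes U: "entries_in_carrier U" and "finite S" "s \<notin> S" "s div r < g"
    and alone: "\<And>j. j \<in> S \<Longrightarrow> j div r \<noteq> s div r" and "indep U S"
  shows "indep U (insert s S)"
proof (rule cols_lin_indep_insert)
  fix d assume d: "d \<in> S \<rightarrow> carrier F"
  have empty: "{j\<in>S. j div r = s div r} = {}" using alone by auto
  have "(\<Oplus>j\<in>S. d j \<otimes> check_matrix U (s div r) j) = \<zero>"
    by (simp only: finsum_local_row[OF \<open>finite S\<close> d \<open>s div r < g\<close>] empty finsum_empty)
  moreover have "check_matrix U (s div r) s = \<one>" using \<open>s div r < g\<close> by (simp add: check_matrix_def)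
  ultimately show "\<exists>i<g + h. check_matrix U i s \<noteq> (\<Oplus>j\<in>S. d j \<otimes> check_matrix U i j)"
    using \<open>s div r < g\<close> by (intro exI[of _ "s div r"]) auto
qed (use assms check_matrix_closed in auto)

text \<open>Columns alone in their group can always be added, so independence of all small sets
  (with at most \<open>h\<close> columns beyond one per group) reduces to sets without such columns.\<close>
lemma indep_if_no_singleton_indep:
  assumes U: "entries_in_carrier U" and A: "A \<subseteq> {..<g * r}"
    and nosing: "\<And>S. S \<subseteq> A \<Longrightarrow> no_singleton_group S \<Longrightarrow> card S \<le> num_groups S + h \<Longrightarrow> indep U S"
  shows "S \<subseteq> A \<Longrightarrow> card S \<le> num_groups S + h \<Longrightarrow> indep U S"
proof (induction "card S" arbitrary: S rule: less_induct)
  case less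
  have "finite S" using less.prems(1) A by (meson finite_lessThan finite_subset subset_trans)
  show ?case
  proof (cases "no_singleton_group S")
    case True
    then show ?thesis using nosing less.prems by blast
  next
    case False
    then obtain s where s: "s \<in> S" and alone: "\<And>j. j \<in> S - {s} \<Longrightarrow> j div r \<noteq> s div r"
      unfolding no_singleton_group_def by blast
    have "s < g * r" using s less.prems(1) A by auto
    then have "s div r < g" using r_pos by (simp add: div_less_iff_less_mult)
    have "groups (S - {s}) = groups S - {s div r}" using s alone by (auto simp: groups_def)
    then have "num_groups (S - {s}) = num_groups S - 1"
      unfolding num_groups_def using s \<open>finite S\<close> by (simp add: card_Diff_singleton groups_def)
    moreover have "num_groups S \<ge> 1"
      unfolding num_groups_def groups_def using s \<open>finite S\<close> by (auto simp: Suc_le_eq card_gt_0_iff)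
    moreover have "card (S - {s}) = card S - 1" using s \<open>finite S\<close> by simp
    moreover have "card (S - {s}) < card S" using s \<open>finite S\<close> by (rule card_Diff1_less[rotated])
    ultimately have "indep U (S - {s})"
      using less.prems by (intro less.hyps) auto
    then have "indep U (insert s (S - {s}))"
      using \<open>finite S\<close> \<open>s div r < g\<close> alone by (intro indep_insert_singleton_group[OF U]) auto
    then show ?thesis using s by (simp add: insert_absorb)
  qed
qed

definition group_rep :: "nat set \<Rightarrow> nat \<Rightarrow> nat" where
  "group_rep S t = Min {j\<in>S. j div r = t}"

definition reps :: "nat set \<Rightarrow> nat set" where
  "reps S = group_rep S ` groups S"

lemma group_rep_mem:
  assumes "finite S" "t \<in> groups S"
  shows "group_rep S t \<in> S" "group_rep S t div r = t"
proof -
  have "{j\<in>S. j div r = t} \<noteq> {}" using assms(2) by (auto simp: groups_def)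
  then have "group_rep S t \<in> {j\<in>S. j div r = t}"
    unfolding group_rep_def using assms(1) by (intro Min_in) auto
  then show "group_rep S t \<in> S" "group_rep S t div r = t" by auto
qed

lemma reps_subset: "finite S \<Longrightarrow> reps S \<subseteq> S"
  using group_rep_mem(1) by (auto simp: reps_def)

lemma reps_same_group: "finite S \<Longrightarrow> x \<in> reps S \<Longrightarrow> y \<in> reps S \<Longrightarrow> x div r = y div r \<Longrightarrow> x = y"
  using group_rep_mem(2) by (auto simp: reps_def)

lemma card_reps: "finite S \<Longrightarrow> card (reps S) = num_groups S"
  unfolding reps_def num_groups_def
  by (intro card_image inj_onI) (metis group_rep_mem(2))

lemma card_diff_reps:
  assumes "finite S"
  shows "card (S - reps S) = card S - num_groups S"
proof -
  have "finite (reps S)" using reps_subset[OF assms] assms by (rule finite_subset)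
  then show ?thesis using assms by (simp add: card_Diff_subset reps_subset card_reps)
qed

lemma groups_diff_reps:
  assumes "finite S" "no_singleton_group S"
  shows "groups (S - reps S) = groups S"
proof
  show "groups (S - reps S) \<subseteq> groups S" by (auto simp: groups_def)
  show "groups S \<subseteq> groups (S - reps S)"
  proof
    fix t assume "t \<in> groups S"
    then obtain j where j: "j \<in> S" "j div r = t" by (auto simp: groups_def)
    then obtain j' where j': "j' \<in> S" "j' \<noteq> j" "j' div r = t"
      using assms(2) unfolding no_singleton_group_def by metis
    then have "j \<notin> reps S \<or> j' \<notin> reps S" using reps_same_group[OF assms(1)] j by metis
    then show "t \<in> groups (S - reps S)" using j j' unfolding groups_def by (metis DiffI image_eqI)
  qed
qed

definition local_solutions :: "nat \<Rightarrow> nat set \<Rightarrow> (nat \<Rightarrow> nat) set" where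
  "local_solutions k S = {d \<in> S \<rightarrow>\<^sub>E carrier F.
     \<forall>t<g. (\<Oplus>j\<in>{j\<in>S. j div r = t}. d j) = (if k div r = t then \<one> else \<zero>)}"

lemma local_solutionsD:
  assumes "d \<in> local_solutions k S"
  shows "d \<in> S \<rightarrow>\<^sub>E carrier F"
    "\<And>t. t < g \<Longrightarrow> (\<Oplus>j\<in>{j\<in>S. j div r = t}. d j) = (if k div r = t then \<one> else \<zero>)"
  using assms by (simp_all add: local_solutions_def)

text \<open>The value at a representative is forced by the group sum.\<close>
lemma local_solutions_eqI:
  assumes "finite S" "S \<subseteq> {..<g * r}"
    and d: "d \<in> local_solutions k S" and d': "d' \<in> local_solutions k S"
    and off: "\<And>y. y \<in> S - reps S \<Longrightarrow> d y = d' y"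
  shows "d = d'"
proof
  fix x
  show "d x = d' x"
  proof (cases "x \<in> reps S")
    case True
    define A where "A = {j\<in>S. j div r = x div r}"
    have "x \<in> S" using subsetD[OF reps_subset[OF assms(1)] True] .
    then have "x < g * r" using subsetD[OF assms(2)] by simp
    then have "x div r < g" using r_pos by (simp add: div_less_iff_less_mult)
    have "finsum F d A = finsum F d' A"
      unfolding A_def
      using local_solutionsD(2)[OF d \<open>x div r < g\<close>] local_solutionsD(2)[OF d' \<open>x div r < g\<close>]
      by (rule trans[OF _ sym])
    moreover have "d y = d' y" if "y \<in> A - {x}" for y
    proof -
      have "y \<noteq> x" "y div r = x div r" "y \<in> S" using that by (auto simp: A_def)
      then have "y \<notin> reps S" using reps_same_group[OF assms(1) True, of y] by auto
      then show ?thesis using off \<open>y \<in> S\<close> by blast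
    qed
    moreover have "A \<subseteq> S" by (auto simp: A_def)
    then have "d \<in> A \<rightarrow> carrier F" "d' \<in> A \<rightarrow> carrier F"
      using local_solutionsD(1)[OF d] local_solutionsD(1)[OF d'] by (auto simp: PiE_iff)
    moreover have "finite A" "x \<in> A" using assms(1) \<open>x \<in> S\<close> by (auto simp: A_def)
    ultimately show ?thesis using finsum_eq_imp_eq_at[of A x d d'] by blast
  next
    case False
    show ?thesis
    proof (cases "x \<in> S")
      case True
      then show ?thesis using off False by blast
    next
      case False
      then show ?thesis
        using PiE_arb[OF local_solutionsD(1)[OF d]] PiE_arb[OF local_solutionsD(1)[OF d']] by metis
    qed
  qed
qed

lemma card_local_solutions:
  assumes "finite S" "S \<subseteq> {..<g * r}" "finite (carrier F)"
  shows "card (local_solutions k S) \<le> card (carrier F) ^ (card S - num_groups S)"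
proof -
  have "inj_on (\<lambda>d. restrict d (S - reps S)) (local_solutions k S)"
  proof (rule inj_onI)
    fix d d' assume "d \<in> local_solutions k S" "d' \<in> local_solutions k S"
      and eq: "restrict d (S - reps S) = restrict d' (S - reps S)"
    moreover have "d y = d' y" if "y \<in> S - reps S" for y
      using fun_cong[OF eq, of y] that by simp
    ultimately show "d = d'" using local_solutions_eqI[OF assms(1,2)] by blast
  qed
  then have "card (local_solutions k S) = card ((\<lambda>d. restrict d (S - reps S)) ` local_solutions k S)"
    by (simp add: card_image)
  also have "\<dots> \<le> card ((S - reps S) \<rightarrow>\<^sub>E carrier F)"
  proof (rule card_mono)
    show "finite ((S - reps S) \<rightarrow>\<^sub>E carrier F)" using assms(1,3) by (simp add: finite_PiE)
    show "(\<lambda>d. restrict d (S - reps S)) ` local_solutions k S \<subseteq> (S - reps S) \<rightarrow>\<^sub>E carrier F"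
    proof (rule image_subsetI)
      fix d assume "d \<in> local_solutions k S"
      then have "\<forall>i\<in>S. d i \<in> carrier F" using local_solutionsD(1) by (simp add: PiE_iff)
      then show "restrict d (S - reps S) \<in> (S - reps S) \<rightarrow>\<^sub>E carrier F"
        by (simp add: restrict_PiE_iff)
    qed
  qed
  also have "\<dots> = card (carrier F) ^ (card S - num_groups S)"
    using assms(1) by (simp add: card_PiE card_diff_reps)
  finally show ?thesis .
qed

definition good_prefix :: "(nat \<Rightarrow> nat \<Rightarrow> nat) \<Rightarrow> nat \<Rightarrow> bool" where
  "good_prefix U k \<longleftrightarrow>
     (\<forall>S. S \<subseteq> {..<k} \<longrightarrow> no_singleton_group S \<longrightarrow> card S \<le> num_groups S + h \<longrightarrow> indep U S)"

lemma indep_if_good_prefix: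
  assumes "entries_in_carrier U" "good_prefix U k" "k \<le> g * r" "S \<subseteq> {..<k}"
    "card S \<le> num_groups S + h"
  shows "indep U S"
  by (rule indep_if_no_singleton_indep[of U "{..<k}"]) (use assms in \<open>auto simp: good_prefix_def\<close>)

text \<open>The sets whose independence is at stake when column \<open>k\<close> is added.\<close>
definition critical_sets :: "nat \<Rightarrow> nat set set" where
  "critical_sets k =
     {S. S \<subseteq> {..<k} \<and> no_singleton_group (insert k S) \<and> card S < num_groups S + h}"

definition bad_columns :: "(nat \<Rightarrow> nat \<Rightarrow> nat) \<Rightarrow> nat \<Rightarrow> nat set \<Rightarrow> (nat \<Rightarrow> nat) set" where
  "bad_columns U k S = (\<lambda>d. \<lambda>i\<in>{..<h}. \<Oplus>j\<in>S. d j \<otimes> U j i) ` local_solutions k S"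

lemma finite_critical_sets: "finite (critical_sets k)"
proof (rule finite_subset)
  show "critical_sets k \<subseteq> Pow {..<k}" unfolding critical_sets_def by (intro subsetI) simp
qed simp

lemma finite_local_solutions:
  assumes "finite S" "finite (carrier F)"
  shows "finite (local_solutions k S)"
proof (rule finite_subset)
  show "local_solutions k S \<subseteq> S \<rightarrow>\<^sub>E carrier F" by (auto simp: local_solutions_def)
  show "finite (S \<rightarrow>\<^sub>E carrier F)" using assms by (rule finite_PiE)
qed

lemma finite_bad_columns: "finite S \<Longrightarrow> finite (carrier F) \<Longrightarrow> finite (bad_columns U k S)"
  unfolding bad_columns_def by (intro finite_imageI finite_local_solutions)

lemma card_bad_columns:
  assumes "S \<in> critical_sets k" "finite (carrier F)" "k < g * r"
  shows "card (bad_columns U k S) \<le> card (carrier F) ^ (h - 1)"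
proof -
  have S: "S \<subseteq> {..<k}" "card S < num_groups S + h" using assms(1) by (auto simp: critical_sets_def)
  have "finite S" using S(1) by (rule finite_subset) simp
  have "S \<subseteq> {..<g * r}" using S(1) assms(3) by auto
  have "card (carrier F) > 0" using assms(2) zero_closed by (simp add: card_gt_0_iff) blast
  have "card (bad_columns U k S) \<le> card (local_solutions k S)"
    unfolding bad_columns_def using \<open>finite S\<close> assms(2)
    by (intro card_image_le finite_local_solutions)
  also have "\<dots> \<le> card (carrier F) ^ (card S - num_groups S)"
    using \<open>finite S\<close> \<open>S \<subseteq> {..<g * r}\<close> assms(2) by (rule card_local_solutions)
  also have "\<dots> \<le> card (carrier F) ^ (h - 1)"
    using S(2) \<open>card (carrier F) > 0\<close> by (intro power_increasing) auto
  finally show ?thesis .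
qed

lemma exists_good_column:
  assumes "finite (carrier F)" "0 < h" "k < g * r" "card (critical_sets k) < card (carrier F)"
  shows "\<exists>u\<in>{..<h} \<rightarrow>\<^sub>E carrier F. \<forall>S\<in>critical_sets k. u \<notin> bad_columns U k S"
proof (rule ccontr)
  define q where "q = card (carrier F)"
  assume "\<not> ?thesis"
  then have "{..<h} \<rightarrow>\<^sub>E carrier F \<subseteq> (\<Union>S\<in>critical_sets k. bad_columns U k S)"
    by (simp add: subset_eq)
  moreover have "finite (\<Union>S\<in>critical_sets k. bad_columns U k S)"
  proof (intro finite_UN_I finite_critical_sets finite_bad_columns assms(1))
    fix S assume "S \<in> critical_sets k"
    then have "S \<subseteq> {..<k}" by (simp add: critical_sets_def)
    then show "finite S" by (rule finite_subset) simp
  qed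
  ultimately have "card ({..<h} \<rightarrow>\<^sub>E carrier F) \<le> card (\<Union>S\<in>critical_sets k. bad_columns U k S)"
    by (intro card_mono)
  also have "\<dots> \<le> (\<Sum>S\<in>critical_sets k. card (bad_columns U k S))"
    by (rule card_UN_le[OF finite_critical_sets])
  also have "\<dots> \<le> (\<Sum>S\<in>critical_sets k. q ^ (h - 1))"
    by (intro sum_mono card_bad_columns[OF _ assms(1,3), folded q_def])
  also have "\<dots> < q * q ^ (h - 1)" using assms(4) unfolding q_def by simp
  also have "\<dots> = q ^ h" using assms(2) by (cases h) simp_all
  finally show False by (simp add: card_PiE q_def)
qed

lemma bad_column_if_dependent:
  fixes U :: "nat \<Rightarrow> nat \<Rightarrow> nat" and u :: "nat \<Rightarrow> nat" and k :: nat
  defines "U' \<equiv> U(k := (\<lambda>i. if i < h then u i else \<zero>))"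
  assumes U: "entries_in_carrier U" and "finite S" "S \<subseteq> {..<k}"
    and u: "u \<in> {..<h} \<rightarrow>\<^sub>E carrier F" and d: "d \<in> S \<rightarrow> carrier F"
    and dep: "\<forall>i<g + h. check_matrix U' i k = (\<Oplus>j\<in>S. d j \<otimes> check_matrix U' i j)"
  shows "u \<in> bad_columns U k S"
proof -
  define d' where "d' = restrict d S"
  have d': "d' \<in> S \<rightarrow>\<^sub>E carrier F" using d by (simp add: d'_def)
  have same: "(\<Oplus>j\<in>S. d j \<otimes> check_matrix U' i j) = (\<Oplus>j\<in>S. d' j \<otimes> check_matrix U i j)" for i
  proof (rule finsum_cong')
    show "\<And>j. j \<in> S \<Longrightarrow> d j \<otimes> check_matrix U' i j = d' j \<otimes> check_matrix U i j"
      using \<open>S \<subseteq> {..<k}\<close> by (auto simp: d'_def U'_def check_matrix_def)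
    show "(\<lambda>j. d' j \<otimes> check_matrix U i j) \<in> S \<rightarrow> carrier F"
      using d' check_matrix_closed[OF U] by (auto simp: PiE_iff)
  qed simp
  have "d' \<in> local_solutions k S"
    unfolding local_solutions_def
  proof (intro CollectI conjI allI impI d')
    fix t assume "t < g"
    have "(if k div r = t then \<one> else \<zero>) = check_matrix U' t k"
      using \<open>t < g\<close> by (simp add: check_matrix_def)
    also have "\<dots> = (\<Oplus>j\<in>S. d' j \<otimes> check_matrix U t j)" using dep \<open>t < g\<close> same by simp
    also have "\<dots> = (\<Oplus>j\<in>{j\<in>S. j div r = t}. d' j)"
      using d' \<open>finite S\<close> \<open>t < g\<close> by (intro finsum_local_row) (auto simp: PiE_iff)
    finally show "(\<Oplus>j\<in>{j\<in>S. j div r = t}. d' j) = (if k div r = t then \<one> else \<zero>)" ..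
  qed
  moreover have "u = (\<lambda>i\<in>{..<h}. \<Oplus>j\<in>S. d' j \<otimes> U j i)"
  proof
    fix i show "u i = (\<lambda>i\<in>{..<h}. \<Oplus>j\<in>S. d' j \<otimes> U j i) i"
    proof (cases "i < h")
      case True
      then have "u i = check_matrix U' (g + i) k" by (simp add: check_matrix_def U'_def)
      also have "\<dots> = (\<Oplus>j\<in>S. d' j \<otimes> check_matrix U (g + i) j)" using dep True same by simp
      also have "\<dots> = (\<Oplus>j\<in>S. d' j \<otimes> U j i)" by (simp add: check_matrix_def)
      finally show ?thesis using True by simp
    next
      case False
      then show ?thesis using PiE_arb[OF u] by simp
    qed
  qed
  ultimately show ?thesis unfolding bad_columns_def image_iff by blast
qed

lemma entries_in_carrier_update:
  "entries_in_carrier U \<Longrightarrow> u \<in> {..<h} \<rightarrow>\<^sub>E carrier F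
    \<Longrightarrow> entries_in_carrier (U(k := (\<lambda>i. if i < h then u i else \<zero>)))"
  by (auto simp: entries_in_carrier_def PiE_iff)

lemma indep_insert_good_column:
  fixes U :: "nat \<Rightarrow> nat \<Rightarrow> nat" and u :: "nat \<Rightarrow> nat" and k :: nat
  defines "U' \<equiv> U(k := (\<lambda>i. if i < h then u i else \<zero>))"
  assumes U: "entries_in_carrier U" and u: "u \<in> {..<h} \<rightarrow>\<^sub>E carrier F"
    and S: "S \<in> critical_sets k" "indep U S" and good: "u \<notin> bad_columns U k S"
  shows "indep U' (insert k S)"
proof -
  have U': "entries_in_carrier U'" unfolding U'_def using U u by (rule entries_in_carrier_update)
  have "S \<subseteq> {..<k}" using S(1) by (simp add: critical_sets_def)
  then have "finite S" "k \<notin> S" by (auto intro: finite_subset)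
  have "indep U S \<longleftrightarrow> indep U' S"
    using \<open>k \<notin> S\<close> by (intro indep_cong[OF U U']) (auto simp: U'_def)
  then have "indep U' S" using S(2) by simp
  then show ?thesis
  proof (rule cols_lin_indep_insert[OF \<open>finite S\<close> \<open>k \<notin> S\<close> _ check_matrix_closed[OF U']])
    fix d assume "d \<in> S \<rightarrow> carrier F"
    show "\<exists>i<g + h. check_matrix U' i k \<noteq> (\<Oplus>j\<in>S. d j \<otimes> check_matrix U' i j)"
    proof (rule ccontr)
      assume "\<not> ?thesis"
      then have "u \<in> bad_columns U k S"
        using bad_column_if_dependent[OF U \<open>finite S\<close> \<open>S \<subseteq> {..<k}\<close> u \<open>d \<in> S \<rightarrow> carrier F\<close>]
        unfolding U'_def by blast
      then show False using good by blast
    qed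
  qed
qed

lemma good_prefix_extend:
  assumes U: "entries_in_carrier U" and good: "good_prefix U k" and "k < g * r"
    and u: "u \<in> {..<h} \<rightarrow>\<^sub>E carrier F" and not_bad: "\<forall>S\<in>critical_sets k. u \<notin> bad_columns U k S"
  shows "good_prefix (U(k := (\<lambda>i. if i < h then u i else \<zero>))) (Suc k)"
    (is "good_prefix ?U' _")
  unfolding good_prefix_def
proof (intro allI impI)
  fix S assume S: "S \<subseteq> {..<Suc k}" and nosing: "no_singleton_group S"
    and small: "card S \<le> num_groups S + h"
  have "finite S" using S by (rule finite_subset) simp
  show "indep ?U' S"
  proof (cases "k \<in> S")
    case False
    then have "S \<subseteq> {..<k}" using S by (auto simp: less_Suc_eq)
    then have "indep U S" using good nosing small by (simp add: good_prefix_def)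
    moreover have "indep U S \<longleftrightarrow> indep ?U' S"
      using False entries_in_carrier_update[OF U u] by (intro indep_cong[OF U]) auto
    ultimately show ?thesis by simp
  next
    case True
    define S' where "S' = S - {k}"
    have S': "S' \<subseteq> {..<k}" "finite S'" "k \<notin> S'" "S = insert k S'"
      using S \<open>finite S\<close> True by (auto simp: S'_def less_Suc_eq)
    obtain j where "j \<in> S'" "j div r = k div r"
      using nosing True unfolding no_singleton_group_def S'_def by blast
    then have "k div r \<in> (\<lambda>j. j div r) ` S'" by (metis image_eqI)
    then have "groups S = groups S'" unfolding groups_def \<open>S = insert k S'\<close> by (simp add: insert_absorb)
    then have sizes: "num_groups S' = num_groups S" "card S' + 1 = card S"
      using S' by (simp_all add: num_groups_def)
    then have "S' \<in> critical_sets k"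
      using S' nosing small by (simp add: critical_sets_def)
    moreover have "indep U S'"
      using indep_if_good_prefix[OF U good] S' \<open>k < g * r\<close> small sizes by simp
    ultimately show ?thesis
      using indep_insert_good_column[OF U u] not_bad \<open>S = insert k S'\<close> by simp
  qed
qed

lemma exists_good_prefix:
  assumes "finite (carrier F)" "0 < h"
    and few: "\<And>k. k < g * r \<Longrightarrow> card (critical_sets k) < card (carrier F)"
  shows "k \<le> g * r \<Longrightarrow> \<exists>U. entries_in_carrier U \<and> good_prefix U k"
proof (induction k)
  case 0
  have "entries_in_carrier (\<lambda>_ _. \<zero>)" by (simp add: entries_in_carrier_def)
  moreover have "good_prefix (\<lambda>_ _. \<zero>) 0" by (simp add: good_prefix_def cols_lin_indep_def)
  ultimately show ?case by blast
next
  case (Suc k)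
  then obtain U where U: "entries_in_carrier U" "good_prefix U k" by auto
  have "k < g * r" using Suc.prems by simp
  obtain u where "u \<in> {..<h} \<rightarrow>\<^sub>E carrier F" "\<forall>S\<in>critical_sets k. u \<notin> bad_columns U k S"
    using exists_good_column[OF assms(1,2) \<open>k < g * r\<close> few[OF \<open>k < g * r\<close>]] by blast
  then show ?case using good_prefix_extend[OF U \<open>k < g * r\<close>] entries_in_carrier_update[OF U(1)] by blast
qed

lemma MR_LRC_if_good_prefix:
  assumes U: "entries_in_carrier U" and good: "good_prefix U (g * r)" and "g + h < g * r"
  shows "MR_LRC F g r h 1 (check_matrix U)"
  unfolding MR_LRC_def
proof (intro conjI allI impI)
  show "g * 1 + h < g * r" using assms(3) by simp
  show "check_matrix U i j \<in> carrier F" for i j using check_matrix_closed[OF U] .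
  show "check_matrix U i j = \<zero>" if "i < g * 1" "j div r \<noteq> i div 1" for i j
    using that by (simp add: check_matrix_def)
next
  fix t assume "t < g"
  have "(\<Oplus>s\<in>{..<1}. x s \<otimes> check_matrix U (t * 1 + s) (t * r + j)) = x 0"
    if "x \<in> {..<1} \<rightarrow> carrier F" "j < r" for x j
    using that \<open>t < g\<close> by (simp add: check_matrix_def lessThan_Suc Pi_iff)
  then have "{j. j < r \<and> (\<Oplus>s\<in>{..<1}. x s \<otimes> check_matrix U (t * 1 + s) (t * r + j)) \<noteq> \<zero>} = {..<r}"
    if "x \<in> {..<1} \<rightarrow> carrier F" "\<exists>s<1. x s \<noteq> \<zero>" for x
    using that by auto
  then show "generates_MDS F r 1 (\<lambda>s j. check_matrix U (t * 1 + s) (t * r + j))"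
    unfolding generates_MDS_def using r_pos by simp
next
  fix S assume S: "S \<subseteq> {..<g * r} \<and> card S = g * 1 + h \<and> (\<forall>t<g. 1 \<le> card (S \<inter> group r t))"
  have "groups S = {..<g}"
  proof
    show "groups S \<subseteq> {..<g}" using S r_pos by (auto simp: groups_def div_less_iff_less_mult)
    show "{..<g} \<subseteq> groups S"
    proof
      fix t assume "t \<in> {..<g}"
      then have "S \<inter> group r t \<noteq> {}" using S by fastforce
      then show "t \<in> groups S" using mem_group_iff[OF r_pos] by (auto simp: groups_def)
    qed
  qed
  then have "card S \<le> num_groups S + h" using S by (simp add: num_groups_def)
  then show "cols_lin_indep F (g * 1 + h) (check_matrix U) S"
    using indep_if_good_prefix[OF U good] S by simp
qed

lemma card_critical_sets_le_two_pow: "card (critical_sets k) \<le> 2 ^ k"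
proof -
  have "critical_sets k \<subseteq> Pow {..<k}" unfolding critical_sets_def by (intro subsetI) simp
  then have "card (critical_sets k) \<le> card (Pow {..<k})" by (intro card_mono) simp_all
  then show ?thesis by (simp add: card_Pow)
qed

definition candidate_sets :: "nat set set" where
  "candidate_sets = {T. T \<subseteq> {..<g * r} \<and> no_singleton_group T \<and> card T \<le> num_groups T + h}"

lemma card_critical_sets_le_candidate_sets:
  assumes "k < g * r"
  shows "card (critical_sets k) \<le> card candidate_sets"
proof -
  have "insert k ` critical_sets k \<subseteq> candidate_sets"
  proof (rule image_subsetI)
    fix S assume "S \<in> critical_sets k"
    then have S: "S \<subseteq> {..<k}" "no_singleton_group (insert k S)" "card S < num_groups S + h"
      unfolding critical_sets_def by simp_all
    have "finite S" using S(1) by (rule finite_subset) simp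
    have "k \<notin> S" using S(1) by (meson lessThan_iff less_irrefl subsetD)
    obtain j where "j \<in> insert k S" "j \<noteq> k" "j div r = k div r"
      using S(2) unfolding no_singleton_group_def by blast
    then have "k div r \<in> groups S" unfolding groups_def by (metis image_eqI insertE)
    then have "num_groups (insert k S) = num_groups S"
      unfolding num_groups_def groups_def by (simp add: insert_absorb)
    moreover have "card (insert k S) = card S + 1" using \<open>finite S\<close> \<open>k \<notin> S\<close> by simp
    moreover have "insert k S \<subseteq> {..<g * r}" using S(1) assms by auto
    ultimately show "insert k S \<in> candidate_sets"
      using S(2,3) unfolding candidate_sets_def by simp
  qed
  moreover have "finite candidate_sets"
  proof (rule finite_subset)
    show "candidate_sets \<subseteq> Pow {..<g * r}" unfolding candidate_sets_def by (intro subsetI) simp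
  qed simp
  ultimately have "card (insert k ` critical_sets k) \<le> card candidate_sets" by (intro card_mono)
  moreover have "inj_on (insert k) (critical_sets k)"
  proof (rule inj_onI)
    fix A B assume "A \<in> critical_sets k" "B \<in> critical_sets k" "insert k A = insert k B"
    moreover from this(1,2) have "A \<subseteq> {..<k}" "B \<subseteq> {..<k}" unfolding critical_sets_def by simp_all
    then have "k \<notin> A" "k \<notin> B" by (meson lessThan_iff less_irrefl subsetD)+
    ultimately show "A = B" by (simp add: insert_ident)
  qed
  ultimately show ?thesis by (simp add: card_image)
qed

text \<open>A candidate set is determined by its at most \<open>h\<close> non-representatives \<open>V\<close> together
  with one representative in each group met by \<open>V\<close>.\<close>
lemma candidate_set_decomposition:
  assumes "T \<in> candidate_sets"
  obtains V f where "V \<subseteq> {..<g * r}" "card V \<le> h" "f \<in> PiE (groups V) (group r)"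
    "T = V \<union> f ` groups V"
proof -
  have T: "T \<subseteq> {..<g * r}" "no_singleton_group T" "card T \<le> num_groups T + h"
    using assms unfolding candidate_sets_def by simp_all
  have "finite T" using T(1) by (rule finite_subset) simp
  define V where "V = T - reps T"
  have groups_V: "groups V = groups T" unfolding V_def using groups_diff_reps \<open>finite T\<close> T(2) .
  show thesis
  proof
    show "V \<subseteq> {..<g * r}" using T(1) by (auto simp: V_def)
    show "card V \<le> h" unfolding V_def using T(3) card_diff_reps[OF \<open>finite T\<close>] by simp
    have "group_rep T t \<in> group r t" if "t \<in> groups T" for t
      using group_rep_mem[OF \<open>finite T\<close> that] mem_group_iff[OF r_pos] by simp
    then show "restrict (group_rep T) (groups V) \<in> PiE (groups V) (group r)"
      by (simp add: groups_V Pi_iff)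
    have "restrict (group_rep T) (groups V) ` groups V = reps T" unfolding groups_V reps_def by auto
    then show "T = V \<union> restrict (group_rep T) (groups V) ` groups V"
      using reps_subset[OF \<open>finite T\<close>] unfolding V_def by auto
  qed
qed

lemma card_candidate_sets: "card candidate_sets \<le> ((g * r + 1) * r) ^ h"
proof -
  define Vs where "Vs = {V. V \<subseteq> {..<g * r} \<and> card V \<le> h}"
  define \<Sigma> where "\<Sigma> = (SIGMA V:Vs. PiE (groups V) (group r))"
  have "candidate_sets \<subseteq> (\<lambda>(V, f). V \<union> f ` groups V) ` \<Sigma>"
  proof
    fix T assume "T \<in> candidate_sets"
    then obtain V f where "V \<subseteq> {..<g * r}" "card V \<le> h" "f \<in> PiE (groups V) (group r)"
      and T: "T = V \<union> f ` groups V"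
      by (rule candidate_set_decomposition)
    then have "(V, f) \<in> \<Sigma>" by (simp add: \<Sigma>_def Vs_def)
    then show "T \<in> (\<lambda>(V, f). V \<union> f ` groups V) ` \<Sigma>"
      unfolding image_iff using T by (intro bexI[of _ "(V, f)"]) simp_all
  qed
  moreover have "finite Vs" by (rule finite_subset[of _ "Pow {..<g * r}"]) (auto simp: Vs_def)
  moreover have fin_Pi: "finite (PiE (groups V) (group r))" if "V \<in> Vs" for V
  proof -
    have "V \<subseteq> {..<g * r}" using that by (simp add: Vs_def)
    then have "finite V" by (rule finite_subset) simp
    then show ?thesis by (intro finite_PiE) (simp_all add: groups_def group_def)
  qed
  ultimately have "card candidate_sets \<le> card ((\<lambda>(V, f). V \<union> f ` groups V) ` \<Sigma>)"
    unfolding \<Sigma>_def by (intro card_mono finite_imageI finite_SigmaI)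
  also have "\<dots> \<le> card \<Sigma>" by (rule card_image_le) (simp add: \<Sigma>_def \<open>finite Vs\<close> fin_Pi)
  also have "\<dots> = (\<Sum>V\<in>Vs. card (PiE (groups V) (group r)))"
    unfolding \<Sigma>_def using \<open>finite Vs\<close> fin_Pi by (simp add: card_SigmaI)
  also have "\<dots> \<le> (\<Sum>V\<in>Vs. r ^ h)"
  proof (rule sum_mono)
    fix V assume "V \<in> Vs"
    then have "finite V" "card V \<le> h" by (auto simp: Vs_def intro: finite_subset)
    have "card (PiE (groups V) (group r)) = (\<Prod>t\<in>groups V. card (group r t))"
      using \<open>finite V\<close> by (simp add: card_PiE groups_def)
    also have "\<dots> = r ^ card (groups V)" by (simp add: group_def)
    also have "\<dots> \<le> r ^ h"
      using card_image_le[OF \<open>finite V\<close>, of "\<lambda>j. j div r"] \<open>card V \<le> h\<close> r_pos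
      by (simp add: groups_def power_increasing)
    finally show "card (PiE (groups V) (group r)) \<le> r ^ h" .
  qed
  also have "\<dots> \<le> (g * r + 1) ^ h * r ^ h"
    using card_bounded_subsets_le[of "g * r" h] by (simp add: Vs_def)
  also have "\<dots> = ((g * r + 1) * r) ^ h" by (rule power_mult_distrib[symmetric])
  finally show ?thesis .
qed

theorem exists_MR_LRC:
  assumes "finite (carrier F)" "0 < h" "g + h < g * r"
    and large: "min (((g * r + 1) * r) ^ h) (2 ^ (g * r - 1)) < card (carrier F)"
  shows "\<exists>H. MR_LRC F g r h 1 H"
proof -
  have "card (critical_sets k) < card (carrier F)" if "k < g * r" for k
  proof -
    have "card (critical_sets k) \<le> ((g * r + 1) * r) ^ h"
      using card_critical_sets_le_candidate_sets[OF that] card_candidate_sets by simp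
    moreover have "(2::nat) ^ k \<le> 2 ^ (g * r - 1)" using that by (intro power_increasing) auto
    then have "card (critical_sets k) \<le> 2 ^ (g * r - 1)"
      using card_critical_sets_le_two_pow[of k] by linarith
    ultimately show ?thesis using large by simp
  qed
  then obtain U where "entries_in_carrier U" "good_prefix U (g * r)"
    using exists_good_prefix[OF assms(1,2)] by blast
  then show ?thesis using MR_LRC_if_good_prefix assms(3) by blast
qed

end

section \<open>The field size\<close>

lemma ex_field_card_prime:
  assumes "nat_prime p"
  shows "\<exists>F::nat ring. field F \<and> finite (carrier F) \<and> card (carrier F) = p"
proof -
  interpret residues_prime p "residue_ring (int p)" by unfold_locales (use assms in auto)
  have inj: "inj_on nat (carrier (residue_ring (int p)))"
    by (auto simp: res_carrier_eq inj_on_def)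
  have "field (image_ring nat (residue_ring (int p)))"
    by (rule inj_imp_image_ring_is_field[OF inj])
  moreover have "card (carrier (image_ring nat (residue_ring (int p)))) = p"
    unfolding image_ring_carrier using card_image[OF inj] by (simp add: res_carrier_eq)
  moreover have "finite (carrier (image_ring nat (residue_ring (int p))))"
    unfolding image_ring_carrier by (simp add: res_carrier_eq)
  ultimately show ?thesis by blast
qed

lemma pow4_le_two_pow: "16 \<le> r \<Longrightarrow> (r::nat) ^ 4 \<le> 2 ^ r"
proof (induction r rule: nat_induct_at_least)
  case base
  then show ?case by simp
next
  case (Suc n)
  have "16 * n ^ 3 \<le> n * n ^ 3" using Suc.hyps by (intro mult_right_mono) auto
  then have "16 * n ^ 3 \<le> n ^ 4" by (simp add: power_def eval_nat_numeral)
  moreover have "n ^ 2 \<le> n ^ 3" "n \<le> n ^ 3" "1 \<le> n ^ 3"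
    using Suc.hyps by (auto simp: power_def eval_nat_numeral)
  moreover have "Suc n ^ 4 = n ^ 4 + 4 * n ^ 3 + 6 * n ^ 2 + 4 * n + 1"
    by (simp add: power_def eval_nat_numeral algebra_simps)
  ultimately have "Suc n ^ 4 \<le> 2 * n ^ 4" by linarith
  also have "\<dots> \<le> 2 * 2 ^ n" using Suc.IH by simp
  finally show ?case by simp
qed

lemma le_log_bound_if_two_pow_lt:
  fixes g r :: nat
  assumes "1 \<le> g" and lt: "2 ^ r < 4 * g * r ^ 2"
  shows "real r \<le> 16 * (1 + ln (real g))"
proof (cases "r \<le> 16")
  case True
  moreover have "0 \<le> ln (real g)" using assms(1) by simp
  ultimately show ?thesis by simp
next
  case False
  then have "r ^ 4 \<le> 2 ^ r" by (intro pow4_le_two_pow) simp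
  have "0 < 4 * g * r ^ 2" using lt by linarith
  then have "2 ^ r * 2 ^ r < (4 * g * r ^ 2) * (4 * g * r ^ 2)" using lt by (intro mult_strict_mono) auto
  also have "\<dots> = 16 * g ^ 2 * r ^ 4" by (simp add: eval_nat_numeral algebra_simps)
  also have "\<dots> \<le> 16 * g ^ 2 * 2 ^ r" using \<open>r ^ 4 \<le> 2 ^ r\<close> by simp
  finally have "2 ^ r * 2 ^ r < 16 * g ^ 2 * 2 ^ r" .
  then have "2 ^ r < 16 * g ^ 2" by (rule mult_right_less_imp_less) simp
  then have "(2::real) ^ r < 16 * real g ^ 2"
    using of_nat_less_iff[of "2 ^ r" "16 * g ^ 2", where 'a = real] by simp
  then have "ln ((2::real) ^ r) < ln (16 * real g ^ 2)" using assms(1) by (subst ln_less_cancel_iff) auto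
  moreover have "ln (16::real) = 4 * ln 2" using ln_realpow[of 2 4] by simp
  ultimately have "(real r - 4) * ln 2 < 2 * ln (real g)"
    using assms(1) by (simp add: ln_mult ln_realpow algebra_simps)
  moreover have "(real r - 4) * (2 / 3) \<le> (real r - 4) * ln 2"
    using ln2_ge_two_thirds False by (intro mult_left_mono) auto
  ultimately have "(real r - 4) * (2 / 3) < 2 * ln (real g)" by linarith
  then have "real r < 4 + 3 * ln (real g)" by (simp add: field_simps)
  moreover have "0 \<le> ln (real g)" using assms(1) by simp
  ultimately show ?thesis by (simp add: ring_distribs)
qed

lemma four_mult_sq_le_bound:
  fixes g r :: nat
  assumes "1 \<le> g"
  shows "4 * real g * real r ^ 2 \<le> max (1024 * real g * (1 + ln (real g)) powr 1024) (2 ^ r)"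
proof (cases "2 ^ r < 4 * g * r ^ 2")
  case False
  then have "real (4 * g * r ^ 2) \<le> real (2 ^ r)" by linarith
  then show ?thesis by simp
next
  case True
  have L: "1 + ln (real g) \<ge> 1" using assms by simp
  have "real r ^ 2 \<le> (16 * (1 + ln (real g))) ^ 2"
    by (rule power_mono[OF le_log_bound_if_two_pow_lt[OF assms True]]) simp
  then have "4 * real g * real r ^ 2 \<le> 4 * real g * (16 * (1 + ln (real g))) ^ 2"
    by (rule mult_left_mono) simp
  also have "\<dots> = 1024 * real g * (1 + ln (real g)) ^ 2" unfolding power_mult_distrib by simp
  also have "\<dots> \<le> 1024 * real g * (1 + ln (real g)) powr 1024"
  proof (rule mult_left_mono)
    have "(1 + ln (real g)) ^ 2 = (1 + ln (real g)) powr 2" using L by (simp add: powr_realpow)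
    also have "\<dots> \<le> (1 + ln (real g)) powr 1024" using L by (intro powr_mono) auto
    finally show "(1 + ln (real g)) ^ 2 \<le> (1 + ln (real g)) powr 1024" .
  qed simp
  finally show ?thesis by (rule max.coboundedI1)
qed

lemma two_mult_min_le_bound:
  fixes g r h :: nat
  assumes "0 < g" "0 < r" "0 < h"
  defines "B \<equiv> max (1024 * real g * (1 + ln (real g)) powr 1024) (2 ^ r)"
  shows "real (2 * min (((g * r + 1) * r) ^ h) (2 ^ (g * r - 1))) \<le> B ^ min h g"
proof (cases "h < g")
  case True
  have "2 * min (((g * r + 1) * r) ^ h) (2 ^ (g * r - 1)) \<le> 2 * ((g * r + 1) * r) ^ h" by simp
  also have "\<dots> \<le> 2 ^ h * ((g * r + 1) * r) ^ h"
    using power_increasing[of 1 h "2::nat"] assms(3) by (intro mult_right_mono) auto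
  also have "\<dots> = (2 * ((g * r + 1) * r)) ^ h" by (simp only: power_mult_distrib)
  also have "\<dots> \<le> (4 * g * r ^ 2) ^ h"
    using assms(1,2) by (intro power_mono) (simp_all add: power2_eq_square algebra_simps)
  finally have "real (2 * min (((g * r + 1) * r) ^ h) (2 ^ (g * r - 1))) \<le> real ((4 * g * r ^ 2) ^ h)"
    by (simp only: of_nat_le_iff)
  also have "\<dots> = (4 * real g * real r ^ 2) ^ h" by simp
  also have "\<dots> \<le> B ^ h"
    unfolding B_def using assms(1) by (intro power_mono four_mult_sq_le_bound) auto
  finally show ?thesis using True by simp
next
  case False
  have "2 * min (((g * r + 1) * r) ^ h) (2 ^ (g * r - 1)) \<le> 2 * 2 ^ (g * r - 1)" by simp
  also have "\<dots> = (2 ^ r) ^ g" using assms(1,2) by (simp flip: power_Suc power_mult add: mult.commute)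
  finally have "real (2 * min (((g * r + 1) * r) ^ h) (2 ^ (g * r - 1))) \<le> real ((2 ^ r) ^ g)"
    by (simp only: of_nat_le_iff)
  also have "\<dots> = (2 ^ r) ^ g" by simp
  also have "\<dots> \<le> B ^ g" unfolding B_def by (intro power_mono) auto
  finally show ?thesis using False by simp
qed

theorem theorem3p10:
  shows "\<exists>C::real. C > 0 \<and>
    (\<forall>r h g :: nat. 0 < r \<longrightarrow> 0 < h \<longrightarrow> 0 < g \<longrightarrow> g + h < g * r \<longrightarrow>
      (\<exists>(F :: nat ring) H. field F \<and> finite (carrier F) \<and> MR_LRC F g r h 1 H \<and>
         real (card (carrier F)) \<le>
           (max (C * real g * (1 + ln (real g)) powr C) (2 ^ r)) ^ (min h g)))"
proof (intro exI[of _ 1024] conjI allI impI)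
  fix r h g :: nat
  assume "0 < r" "0 < h" "0 < g" "g + h < g * r"
  define M where "M = min (((g * r + 1) * r) ^ h) (2 ^ (g * r - 1))"
  have "1 \<le> M" using \<open>0 < r\<close> by (simp add: M_def)
  then obtain p where p: "nat_prime p" "M < p" "p \<le> 2 * M" using bertrand by blast
  then obtain F :: "nat ring" where F: "field F" "finite (carrier F)" "card (carrier F) = p"
    using ex_field_card_prime by blast
  interpret lrc_construction F g r h
    unfolding lrc_construction_def lrc_construction_axioms_def nat_field_def
    using F(1) \<open>0 < r\<close> by simp
  obtain H where "MR_LRC F g r h 1 H"
    using exists_MR_LRC F \<open>0 < h\<close> \<open>g + h < g * r\<close> p(2) unfolding M_def by blast
  moreover have "real (card (carrier F)) \<le> real (2 * M)" using p F by simp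
  ultimately show "\<exists>F H. field F \<and> finite (carrier F) \<and> MR_LRC F g r h 1 H \<and>
      real (card (carrier F)) \<le> (max (1024 * real g * (1 + ln (real g)) powr 1024) (2 ^ r)) ^ min h g"
    using F two_mult_min_le_bound[OF \<open>0 < g\<close> \<open>0 < r\<close> \<open>0 < h\<close>] unfolding M_def by force
qed (simp)

end
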